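(* Every constantizable complete theory is strongly minimal.
   Context: A $T$-formula $\varphi(\overline{x})$ is constantizable if $T$ has an expansion $T'$ (a complete theory $T'\supseteq T$ in a larger language) such that $\varphi(\overline{x})$ is $T'$-equivalent to a Boolean combination of formulas of the forms $x\approx y$ and $x\approx c$, with variables $x,y$ and constant symbols $c$. A theory $T$ is constantizable if every $T$-formula is constantizable. $T$ is strongly minimal if for every formula $\varphi(x,\bar a)$ with parameters $\bar a$ from a model of $T$, either $\varphi(x,\bar a)$ or $\neg\varphi(x,\bar a)$ has finitely many solutions. *)

theory Defs
  imports Main
begin

datatype 'f trm = Var nat | Fn 'f "'f trm list"

datatype ('f, 'r) fm =
    FF
  | Eq "'f trm" "'f trm"
  | Rl 'r "'f trm list"
  | Neg "('f, 'r) fm"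
  | Conj "('f, 'r) fm" "('f, 'r) fm"
  | Ex nat "('f, 'r) fm"

text \<open>A language: partial arity maps for function symbols and relation symbols.
  A symbol belongs to the language iff its arity is defined.
  Constant symbols are function symbols of arity 0.\<close>
type_synonym ('f, 'r) lang = "('f \<rightharpoonup> nat) \<times> ('r \<rightharpoonup> nat)"

definition sublang :: "('f, 'r) lang \<Rightarrow> ('f, 'r) lang \<Rightarrow> bool" where
  "sublang L L' \<longleftrightarrow> fst L \<subseteq>\<^sub>m fst L' \<and> snd L \<subseteq>\<^sub>m snd L'"

fun wf_trm :: "('f, 'r) lang \<Rightarrow> 'f trm \<Rightarrow> bool" where
  "wf_trm L (Var x) = True"
| "wf_trm L (Fn f ts) = (fst L f = Some (length ts) \<and> (\<forall>t\<in>set ts. wf_trm L t))"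

fun wf_fm :: "('f, 'r) lang \<Rightarrow> ('f, 'r) fm \<Rightarrow> bool" where
  "wf_fm L FF = True"
| "wf_fm L (Eq s t) = (wf_trm L s \<and> wf_trm L t)"
| "wf_fm L (Rl r ts) = (snd L r = Some (length ts) \<and> (\<forall>t\<in>set ts. wf_trm L t))"
| "wf_fm L (Neg p) = wf_fm L p"
| "wf_fm L (Conj p q) = (wf_fm L p \<and> wf_fm L q)"
| "wf_fm L (Ex x p) = wf_fm L p"

fun fv_trm :: "'f trm \<Rightarrow> nat set" where
  "fv_trm (Var x) = {x}"
| "fv_trm (Fn f ts) = (\<Union>t\<in>set ts. fv_trm t)"

fun fv :: "('f, 'r) fm \<Rightarrow> nat set" where
  "fv FF = {}"
| "fv (Eq s t) = fv_trm s \<union> fv_trm t"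
| "fv (Rl r ts) = (\<Union>t\<in>set ts. fv_trm t)"
| "fv (Neg p) = fv p"
| "fv (Conj p q) = fv p \<union> fv q"
| "fv (Ex x p) = fv p - {x}"

definition sentence :: "('f, 'r) lang \<Rightarrow> ('f, 'r) fm \<Rightarrow> bool" where
  "sentence L p \<longleftrightarrow> wf_fm L p \<and> fv p = {}"

record ('f, 'r, 'u) struc =
  dom :: "'u set"
  fn  :: "'f \<Rightarrow> 'u list \<Rightarrow> 'u"
  rl  :: "'r \<Rightarrow> 'u list \<Rightarrow> bool"

definition is_struc :: "('f, 'r) lang \<Rightarrow> ('f, 'r, 'u) struc \<Rightarrow> bool" where
  "is_struc L M \<longleftrightarrow> dom M \<noteq> {} \<and>
     (\<forall>f n xs. fst L f = Some n \<longrightarrow> length xs = n \<longrightarrow> set xs \<subseteq> dom M \<longrightarrow> fn M f xs \<in> dom M)"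

fun eval :: "('f, 'r, 'u) struc \<Rightarrow> (nat \<Rightarrow> 'u) \<Rightarrow> 'f trm \<Rightarrow> 'u" where
  "eval M e (Var x) = e x"
| "eval M e (Fn f ts) = fn M f (map (eval M e) ts)"

fun sat :: "('f, 'r, 'u) struc \<Rightarrow> (nat \<Rightarrow> 'u) \<Rightarrow> ('f, 'r) fm \<Rightarrow> bool" where
  "sat M e FF = False"
| "sat M e (Eq s t) = (eval M e s = eval M e t)"
| "sat M e (Rl r ts) = rl M r (map (eval M e) ts)"
| "sat M e (Neg p) = (\<not> sat M e p)"
| "sat M e (Conj p q) = (sat M e p \<and> sat M e q)"
| "sat M e (Ex x p) = (\<exists>a\<in>dom M. sat M (e(x := a)) p)"

definition holds :: "('f, 'r, 'u) struc \<Rightarrow> ('f, 'r) fm \<Rightarrow> bool" where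
  "holds M p \<longleftrightarrow> (\<forall>e. range e \<subseteq> dom M \<longrightarrow> sat M e p)"

definition Th :: "('f, 'r) lang \<Rightarrow> ('f, 'r, 'u) struc \<Rightarrow> ('f, 'r) fm set" where
  "Th L M = {p. sentence L p \<and> holds M p}"

definition is_model :: "('f, 'r) lang \<Rightarrow> ('f, 'r) fm set \<Rightarrow> ('f, 'r, 'u) struc \<Rightarrow> bool" where
  "is_model L T M \<longleftrightarrow> is_struc L M \<and> (\<forall>p\<in>T. holds M p)"

text \<open>A complete L-theory: the theory of some L-structure (with universe in type 'u).\<close>
definition complete_theory :: "'u itself \<Rightarrow> ('f, 'r) lang \<Rightarrow> ('f, 'r) fm set \<Rightarrow> bool" where
  "complete_theory U L T \<longleftrightarrow> (\<exists>M :: ('f, 'r, 'u) struc. is_struc L M \<and> T = Th L M)"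

inductive_set boolcomb :: "('f, 'r) lang \<Rightarrow> ('f, 'r) fm set" for L where
  eq_var: "Eq (Var x) (Var y) \<in> boolcomb L"
| eq_const: "fst L c = Some 0 \<Longrightarrow> Eq (Var x) (Fn c []) \<in> boolcomb L"
| bot: "FF \<in> boolcomb L"
| neg: "p \<in> boolcomb L \<Longrightarrow> Neg p \<in> boolcomb L"
| conj: "p \<in> boolcomb L \<Longrightarrow> q \<in> boolcomb L \<Longrightarrow> Conj p q \<in> boolcomb L"

definition equiv_in :: "'u itself \<Rightarrow> ('f, 'r) lang \<Rightarrow> ('f, 'r) fm set \<Rightarrow> ('f, 'r) fm \<Rightarrow> ('f, 'r) fm \<Rightarrow> bool" where
  "equiv_in U L T p q \<longleftrightarrow>
     (\<forall>M :: ('f, 'r, 'u) struc. is_model L T M \<longrightarrow>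
        (\<forall>e. range e \<subseteq> dom M \<longrightarrow> (sat M e p \<longleftrightarrow> sat M e q)))"

definition constantizable_fm ::
  "'u itself \<Rightarrow> ('f, 'r) lang \<Rightarrow> ('f, 'r) fm set \<Rightarrow> ('f, 'r) fm \<Rightarrow> bool" where
  "constantizable_fm U L T p \<longleftrightarrow>
     (\<exists>L' T'. sublang L L' \<and> complete_theory U L' T' \<and> T \<subseteq> T' \<and>
        (\<exists>q \<in> boolcomb L'. equiv_in U L' T' p q))"

definition constantizable :: "'u itself \<Rightarrow> ('f, 'r) lang \<Rightarrow> ('f, 'r) fm set \<Rightarrow> bool" where
  "constantizable U L T \<longleftrightarrow> (\<forall>p. wf_fm L p \<longrightarrow> constantizable_fm U L T p)"

text \<open>Strong minimality: in every model of T (universe in type 'v), every formula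
  phi(x, a) with parameters a (given by the assignment e) defines a finite or cofinite set.\<close>
definition strongly_minimal :: "'v itself \<Rightarrow> ('f, 'r) lang \<Rightarrow> ('f, 'r) fm set \<Rightarrow> bool" where
  "strongly_minimal V L T \<longleftrightarrow>
     (\<forall>N :: ('f, 'r, 'v) struc. is_model L T N \<longrightarrow>
        (\<forall>p x e. wf_fm L p \<longrightarrow> range e \<subseteq> dom N \<longrightarrow>
           finite {a \<in> dom N. sat N (e(x := a)) p} \<or>
           finite {a \<in> dom N. \<not> sat N (e(x := a)) p}))"

end

(* If p(x, y) is equivalent in a model M' of the expansion T' to a Boolean combination q of
   equations x = y and x = c, then q, and hence p, defines in M' a set of size at most n or of
   co-size at most n for every choice of the parameters y, with n depending on q only. Since the
   bound is stated through p rather than q, this is a first-order L-sentence; it holds in M',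
   which is a model of the complete theory T, so it belongs to T and holds in every model of T. *)

theory Submission
  imports Defs
begin

lemma eval_cong: "\<forall>v\<in>fv_trm t. e v = e' v \<Longrightarrow> eval M e t = eval M e' t"
  by (induction t) (auto cong: map_cong)

lemma sat_cong: "\<forall>v\<in>fv p. e v = e' v \<Longrightarrow> sat M e p = sat M e' p"
proof (induction p arbitrary: e e')
  case (Eq s t)
  then have "eval M e s = eval M e' s" "eval M e t = eval M e' t" by (auto intro!: eval_cong)
  then show ?case by simp
next
  case (Rl r ts)
  then have "map (eval M e) ts = map (eval M e') ts" by (auto intro!: eval_cong)
  then show ?case by (simp only: sat.simps)
next
  case (Ex x p)
  then have "sat M (e(x := a)) p = sat M (e'(x := a)) p" for a by auto
  then show ?case by simp
next
  case (Conj p q)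
  have "sat M e p = sat M e' p" "sat M e q = sat M e' q"
    using Conj.prems by (auto intro!: Conj.IH)
  then show ?case by simp
qed simp_all

lemma finite_fv: "finite (fv p)"
proof -
  have "finite (fv_trm t)" for t :: "'f trm" by (induction t) auto
  then show ?thesis by (induction p) auto
qed

lemma sat_Exs:
  "sat M e (foldr Ex zs p) \<longleftrightarrow> (\<exists>g. g ` set zs \<subseteq> dom M \<and> sat M (override_on e g (set zs)) p)"
proof (induction zs arbitrary: e)
  case Nil
  then show ?case by simp
next
  case (Cons z zs)
  have shift: "override_on (e(z := a)) g (set zs) = override_on e (override_on (\<lambda>_. a) g (set zs)) (set (z # zs))"
    for a g by (auto simp: override_on_def)
  show ?case
  proof
    assume "sat M e (foldr Ex (z # zs) p)"
    then obtain a where "a \<in> dom M" "sat M (e(z := a)) (foldr Ex zs p)" by auto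
    moreover from this(2) obtain g where "g ` set zs \<subseteq> dom M" "sat M (override_on (e(z := a)) g (set zs)) p"
      using Cons.IH by blast
    ultimately show "\<exists>g. g ` set (z # zs) \<subseteq> dom M \<and> sat M (override_on e g (set (z # zs))) p"
      unfolding shift by (intro exI[of _ "override_on (\<lambda>_. a) g (set zs)"]) (auto simp: override_on_def)
  next
    assume "\<exists>g. g ` set (z # zs) \<subseteq> dom M \<and> sat M (override_on e g (set (z # zs))) p"
    then obtain g where "g ` set (z # zs) \<subseteq> dom M" "sat M (override_on e g (set (z # zs))) p" by blast
    moreover have "override_on (e(z := g z)) g (set zs) = override_on e g (set (z # zs))"
      by (auto simp: override_on_def)
    ultimately have "sat M (e(z := g z)) (foldr Ex zs p)"
      by (metis Cons.IH image_mono set_subset_Cons order_trans)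
    then show "sat M e (foldr Ex (z # zs) p)"
      using \<open>g ` set (z # zs) \<subseteq> dom M\<close> by auto
  qed
qed

lemma fv_Exs: "fv (foldr Ex zs p) = fv p - set zs"
  by (induction zs) auto

lemma wf_fm_Exs: "wf_fm L (foldr Ex zs p) = wf_fm L p"
  by (induction zs) auto

definition univ_closure :: "('f, 'r) fm \<Rightarrow> ('f, 'r) fm" where
  "univ_closure p = Neg (foldr Ex (sorted_list_of_set (fv p)) (Neg p))"

lemma sentence_univ_closure: "wf_fm L p \<Longrightarrow> sentence L (univ_closure p)"
  by (simp add: sentence_def univ_closure_def fv_Exs wf_fm_Exs finite_fv)

lemma holds_univ_closure: "holds M (univ_closure p) \<longleftrightarrow> holds M p"
proof
  assume closed: "holds M (univ_closure p)"
  show "holds M p" unfolding holds_def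
  proof (intro allI impI)
    fix e :: "nat \<Rightarrow> _" assume "range e \<subseteq> dom M"
    moreover have "override_on e e A = e" for A
      by (simp add: override_on_def)
    ultimately show "sat M e p"
      using closed unfolding holds_def univ_closure_def
      by (auto simp: sat_Exs dest!: spec[of _ e] intro: image_subsetI)
  qed
next
  assume "holds M p"
  moreover have "range (override_on e g A) \<subseteq> dom M"
    if "range e \<subseteq> dom M" "g ` A \<subseteq> dom M" for e g :: "nat \<Rightarrow> _" and A
    using that by (auto simp: override_on_def)
  ultimately show "holds M (univ_closure p)"
    unfolding holds_def univ_closure_def by (auto simp: sat_Exs)
qed

lemma holds_iff_sat_const:
  assumes "fv p = {}" and "a \<in> dom M"
  shows "holds M p \<longleftrightarrow> sat M (\<lambda>_. a) p"
proof -
  have "sat M e p = sat M (\<lambda>_. a) p" for e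
    using assms(1) by (intro sat_cong) simp
  then show ?thesis using assms(2) unfolding holds_def by auto
qed

lemma holds_Neg_iff:
  assumes "fv p = {}" and "dom M \<noteq> {}"
  shows "holds M (Neg p) \<longleftrightarrow> \<not> holds M p"
proof -
  obtain a where "a \<in> dom M" using assms(2) by blast
  then show ?thesis using assms(1) holds_iff_sat_const[of _ a M] by simp
qed

definition Disj :: "('f, 'r) fm \<Rightarrow> ('f, 'r) fm \<Rightarrow> ('f, 'r) fm" where
  "Disj p q = Neg (Conj (Neg p) (Neg q))"

definition Disjs :: "('f, 'r) fm list \<Rightarrow> ('f, 'r) fm" where
  "Disjs ps = foldr Disj ps FF"

lemma sat_Disj [simp]: "sat M e (Disj p q) \<longleftrightarrow> sat M e p \<or> sat M e q"
  by (simp add: Disj_def)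

lemma wf_fm_Disj [simp]: "wf_fm L (Disj p q) \<longleftrightarrow> wf_fm L p \<and> wf_fm L q"
  by (simp add: Disj_def)

lemma sat_Disjs [simp]: "sat M e (Disjs ps) \<longleftrightarrow> (\<exists>p\<in>set ps. sat M e p)"
  by (induction ps) (auto simp: Disjs_def)

lemma wf_fm_Disjs: "\<forall>p\<in>set ps. wf_fm L p \<Longrightarrow> wf_fm L (Disjs ps)"
  by (induction ps) (auto simp: Disjs_def)

definition at_most :: "nat \<Rightarrow> 'a set \<Rightarrow> bool" where
  "at_most n A \<longleftrightarrow> finite A \<and> card A \<le> n"

lemma at_most_subset: "at_most n B \<Longrightarrow> A \<subseteq> B \<Longrightarrow> at_most n A"
  unfolding at_most_def by (meson card_mono finite_subset order_trans)

lemma at_most_Un: "at_most n A \<Longrightarrow> at_most m B \<Longrightarrow> at_most (n + m) (A \<union> B)"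
  unfolding at_most_def by (meson card_Un_le add_mono finite_UnI order_trans)

lemma at_most_Int_left: "at_most n A \<Longrightarrow> at_most (n + m) (A \<inter> B)"
  unfolding at_most_def by (meson Int_lower1 card_mono finite_Int le_add1 order_trans)

lemma at_most_Int_right: "at_most m B \<Longrightarrow> at_most (n + m) (A \<inter> B)"
  using at_most_Int_left[of m B n A] by (simp add: Int_commute add.commute)

lemma finite_or_cofinite_Int:
  assumes "at_most n A \<or> at_most n (- A)" and "at_most m B \<or> at_most m (- B)"
  shows "at_most (n + m) (A \<inter> B) \<or> at_most (n + m) (- (A \<inter> B))"
  using assms at_most_Int_left at_most_Int_right at_most_Un[of n "- A" m "- B"] by auto

lemma ex_image_cover_iff:
  assumes "finite Z" and "S \<subseteq> D" and "D \<noteq> {}"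
  shows "(\<exists>g. g ` Z \<subseteq> D \<and> S \<subseteq> g ` Z) \<longleftrightarrow> at_most (card Z) S"
proof
  assume "\<exists>g. g ` Z \<subseteq> D \<and> S \<subseteq> g ` Z"
  then obtain g where "S \<subseteq> g ` Z" by blast
  moreover have "at_most (card Z) (g ` Z)"
    using assms(1) card_image_le by (auto simp: at_most_def)
  ultimately show "at_most (card Z) S"
    by (rule at_most_subset[rotated])
next
  assume "at_most (card Z) S"
  then obtain f where f: "f ` S \<subseteq> Z" "inj_on f S"
    using card_le_inj[of S Z] assms(1) unfolding at_most_def by blast
  obtain d where d: "d \<in> D" using assms(3) by blast
  define g where "g z = (if z \<in> f ` S then the_inv_into S f z else d)" for z
  have "g ` Z \<subseteq> D"
    using the_inv_into_into[OF f(2)] assms(2) d unfolding g_def by (simp add: image_subset_iff)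
  moreover have "S \<subseteq> g ` Z"
  proof
    fix s assume "s \<in> S"
    then have "s = g (f s)" and "f s \<in> Z"
      using f by (auto simp: g_def the_inv_into_f_f)
    then show "s \<in> g ` Z" by (rule image_eqI)
  qed
  ultimately show "\<exists>g. g ` Z \<subseteq> D \<and> S \<subseteq> g ` Z" by blast
qed

definition fresh_vars :: "nat \<Rightarrow> nat set \<Rightarrow> nat list" where
  "fresh_vars n V = [Suc (Max V)..<Suc (Max V) + n]"

lemma fresh_vars_disjoint: "finite V \<Longrightarrow> set (fresh_vars n V) \<inter> V = {}"
  by (auto simp: fresh_vars_def dest: Max_ge)

lemma card_set_fresh_vars: "card (set (fresh_vars n V)) = n"
  unfolding fresh_vars_def set_upt by simp

definition at_most_fm :: "nat \<Rightarrow> nat \<Rightarrow> ('f, 'r) fm \<Rightarrow> ('f, 'r) fm" where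
  "at_most_fm n x p =
     (let zs = fresh_vars n (insert x (fv p))
      in foldr Ex zs (Neg (Ex x (Conj p (Neg (Disjs (map (\<lambda>z. Eq (Var x) (Var z)) zs)))))))"

lemma wf_fm_at_most_fm: "wf_fm L p \<Longrightarrow> wf_fm L (at_most_fm n x p)"
  by (auto simp: at_most_fm_def Let_def wf_fm_Exs intro!: wf_fm_Disjs)

lemma sat_at_most_fm:
  assumes "dom M \<noteq> {}"
  shows "sat M e (at_most_fm n x p) \<longleftrightarrow> at_most n {a \<in> dom M. sat M (e(x := a)) p}"
proof -
  define Z where "Z = set (fresh_vars n (insert x (fv p)))"
  have Z: "Z \<inter> insert x (fv p) = {}" "card Z = n" "finite Z"
    unfolding Z_def using fresh_vars_disjoint[of "insert x (fv p)" n] finite_fv[of p]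
    by (auto simp: card_set_fresh_vars)
  have witnesses: "(\<exists>z\<in>Z. a = ((override_on e g Z)(x := a)) z) \<longleftrightarrow> a \<in> g ` Z" for g a
    using Z(1) by (auto simp: override_on_def)
  have params: "sat M ((override_on e g Z)(x := a)) p = sat M (e(x := a)) p" for g a
    using Z(1) by (intro sat_cong) (auto simp: override_on_def)
  have "sat M e (at_most_fm n x p) \<longleftrightarrow> (\<exists>g. g ` Z \<subseteq> dom M \<and>
      (\<forall>a\<in>dom M. sat M ((override_on e g Z)(x := a)) p \<longrightarrow>
         (\<exists>z\<in>Z. a = ((override_on e g Z)(x := a)) z)))"
    unfolding at_most_fm_def Let_def sat_Exs Z_def by simp
  also have "\<dots> \<longleftrightarrow> (\<exists>g. g ` Z \<subseteq> dom M \<and> {a \<in> dom M. sat M (e(x := a)) p} \<subseteq> g ` Z)"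
  proof -
    have "{a \<in> dom M. sat M (e(x := a)) p} \<subseteq> B \<longleftrightarrow> (\<forall>a\<in>dom M. sat M (e(x := a)) p \<longrightarrow> a \<in> B)" for B
      by blast
    then show ?thesis by (simp only: witnesses params)
  qed
  also have "\<dots> \<longleftrightarrow> at_most n {a \<in> dom M. sat M (e(x := a)) p}"
    using ex_image_cover_iff[OF Z(3) _ assms] Z(2) by simp
  finally show ?thesis .
qed

definition finite_or_cofinite_fm :: "nat \<Rightarrow> nat \<Rightarrow> ('f, 'r) fm \<Rightarrow> ('f, 'r) fm" where
  "finite_or_cofinite_fm n x p = Disj (at_most_fm n x p) (at_most_fm n x (Neg p))"

lemma wf_fm_finite_or_cofinite_fm: "wf_fm L p \<Longrightarrow> wf_fm L (finite_or_cofinite_fm n x p)"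
  by (simp add: finite_or_cofinite_fm_def wf_fm_at_most_fm)

lemma sat_finite_or_cofinite_fm:
  assumes "dom M \<noteq> {}"
  shows "sat M e (finite_or_cofinite_fm n x p) \<longleftrightarrow>
    at_most n {a \<in> dom M. sat M (e(x := a)) p} \<or> at_most n {a \<in> dom M. \<not> sat M (e(x := a)) p}"
  by (simp add: finite_or_cofinite_fm_def sat_at_most_fm[OF assms])

lemma boolcomb_finite_or_cofinite:
  fixes M :: "('f, 'r, 'u) struc"
  assumes "q \<in> boolcomb L"
  shows "\<exists>n. \<forall>e. at_most n {a. sat M (e(x := a)) q} \<or> at_most n (- {a. sat M (e(x := a)) q})"
  using assms
proof (induction q rule: boolcomb.induct)
  case (eq_var u v)
  have "at_most 1 {a. (e(x := a)) u = (e(x := a)) v} \<or> at_most 1 (- {a. (e(x := a)) u = (e(x := a)) v})" for e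
    by (cases "u = x"; cases "v = x") (auto simp: at_most_def)
  then show ?case by (intro exI[of _ 1] allI) (simp only: sat.simps eval.simps)
next
  case (eq_const c u)
  have "at_most 1 {a. (e(x := a)) u = fn M c []} \<or> at_most 1 (- {a. (e(x := a)) u = fn M c []})" for e
    by (cases "u = x") (auto simp: at_most_def)
  then show ?case by (intro exI[of _ 1] allI) (simp only: sat.simps eval.simps list.map)
next
  case bot
  then show ?case by (auto simp: at_most_def)
next
  case (neg p)
  then show ?case by (auto simp: Collect_neg_eq[symmetric])
next
  case (conj p q)
  then obtain n m where
    n: "\<forall>e. at_most n {a. sat M (e(x := a)) p} \<or> at_most n (- {a. sat M (e(x := a)) p})" and
    m: "\<forall>e. at_most m {a. sat M (e(x := a)) q} \<or> at_most m (- {a. sat M (e(x := a)) q})"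
    by blast
  have "at_most (n + m) {a. sat M (e(x := a)) (Conj p q)} \<or>
      at_most (n + m) (- {a. sat M (e(x := a)) (Conj p q)})" for e
    using finite_or_cofinite_Int[OF n[rule_format, of e] m[rule_format, of e]]
    by (simp add: Collect_conj_eq)
  then show ?case by blast
qed

lemma boolcomb_equiv_finite_or_cofinite:
  assumes "q \<in> boolcomb L" and "dom M \<noteq> {}"
    and equiv: "\<forall>e. range e \<subseteq> dom M \<longrightarrow> (sat M e p \<longleftrightarrow> sat M e q)"
  obtains n where "holds M (finite_or_cofinite_fm n x p)"
proof -
  obtain n where n: "\<forall>e. at_most n {a. sat M (e(x := a)) q} \<or> at_most n (- {a. sat M (e(x := a)) q})"
    using boolcomb_finite_or_cofinite[OF assms(1)] by blast
  have "sat M e (finite_or_cofinite_fm n x p)" if e: "range e \<subseteq> dom M" for e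
  proof -
    have "range (e(x := a)) \<subseteq> dom M" if "a \<in> dom M" for a
      using e that by auto
    then have "{a \<in> dom M. sat M (e(x := a)) p} \<subseteq> {a. sat M (e(x := a)) q}"
      and "{a \<in> dom M. \<not> sat M (e(x := a)) p} \<subseteq> - {a. sat M (e(x := a)) q}"
      using equiv by auto
    then show ?thesis
      unfolding sat_finite_or_cofinite_fm[OF assms(2)]
      using n[rule_format, of e] at_most_subset by blast
  qed
  then show ?thesis using that holds_def by blast
qed

lemma complete_theory_mem_if_holds:
  fixes T :: "('f, 'r) fm set" and N :: "('f, 'r, 'v) struc"
  assumes "complete_theory TYPE('u) L T" and "is_model L T N"
    and "sentence L \<sigma>" and "holds N \<sigma>"
  shows "\<sigma> \<in> T"
proof (rule ccontr)
  assume "\<sigma> \<notin> T"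
  obtain M :: "('f, 'r, 'u) struc" where M: "is_struc L M" "T = Th L M"
    using assms(1) unfolding complete_theory_def by blast
  have closed: "fv \<sigma> = {}" "sentence L (Neg \<sigma>)"
    using assms(3) by (auto simp: sentence_def)
  have "dom M \<noteq> {}" and "dom N \<noteq> {}"
    using M(1) assms(2) by (simp_all add: is_struc_def is_model_def)
  have "\<not> holds M \<sigma>"
    using \<open>\<sigma> \<notin> T\<close> M(2) assms(3) by (simp add: Th_def)
  then have "Neg \<sigma> \<in> T"
    using M(2) closed(2) holds_Neg_iff[OF closed(1) \<open>dom M \<noteq> {}\<close>] by (simp add: Th_def)
  then have "holds N (Neg \<sigma>)"
    using assms(2) by (simp add: is_model_def)
  then show False
    using assms(4) holds_Neg_iff[OF closed(1) \<open>dom N \<noteq> {}\<close>] by simp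
qed

lemma is_struc_sublang: "sublang L L' \<Longrightarrow> is_struc L' M \<Longrightarrow> is_struc L M"
  unfolding sublang_def is_struc_def map_le_def by (metis domI)

lemma constantizable_fm_model:
  fixes T :: "('f, 'r) fm set"
  assumes "constantizable_fm TYPE('u) L T p"
  obtains L' q and M' :: "('f, 'r, 'u) struc"
  where "is_model L T M'" and "q \<in> boolcomb L'"
    and "\<forall>e. range e \<subseteq> dom M' \<longrightarrow> (sat M' e p \<longleftrightarrow> sat M' e q)"
proof -
  obtain L' T' q where L': "sublang L L'" "complete_theory TYPE('u) L' T'" "T \<subseteq> T'"
    and q: "q \<in> boolcomb L'" "equiv_in TYPE('u) L' T' p q"
    using assms unfolding constantizable_fm_def by blast
  obtain M' :: "('f, 'r, 'u) struc" where M': "is_struc L' M'" "T' = Th L' M'"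
    using L'(2) unfolding complete_theory_def by blast
  then have "is_model L' T' M'"
    by (simp add: is_model_def Th_def)
  then have "\<forall>e. range e \<subseteq> dom M' \<longrightarrow> (sat M' e p \<longleftrightarrow> sat M' e q)"
    using q(2) unfolding equiv_in_def by blast
  moreover have "is_model L T M'"
    using \<open>is_model L' T' M'\<close> is_struc_sublang[OF L'(1)] L'(3) by (auto simp: is_model_def)
  ultimately show ?thesis
    using that q(1) by blast
qed

theorem corollary3p8:
  fixes L :: "('f, 'r) lang" and T :: "('f, 'r) fm set"
  assumes "complete_theory TYPE('u) L T"
    and "constantizable TYPE('u) L T"
  shows "strongly_minimal TYPE('v) L T"
  unfolding strongly_minimal_def
proof (intro allI impI)
  fix N :: "('f, 'r, 'v) struc" and p :: "('f, 'r) fm" and x :: nat and e :: "nat \<Rightarrow> 'v"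
  assume N: "is_model L T N" and p: "wf_fm L p" and e: "range e \<subseteq> dom N"
  obtain L' q and M' :: "('f, 'r, 'u) struc" where M': "is_model L T M'" "q \<in> boolcomb L'"
    and equiv: "\<forall>e. range e \<subseteq> dom M' \<longrightarrow> (sat M' e p \<longleftrightarrow> sat M' e q)"
    using assms(2) p constantizable_fm_model unfolding constantizable_def by metis
  have "dom M' \<noteq> {}"
    using M'(1) by (simp add: is_model_def is_struc_def)
  then obtain n where n: "holds M' (finite_or_cofinite_fm n x p)"
    by (rule boolcomb_equiv_finite_or_cofinite[OF M'(2) _ equiv])
  have "univ_closure (finite_or_cofinite_fm n x p) \<in> T"
    using M'(1) p n by (intro complete_theory_mem_if_holds[OF assms(1)])
      (simp_all add: holds_univ_closure sentence_univ_closure wf_fm_finite_or_cofinite_fm)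
  then have "holds N (finite_or_cofinite_fm n x p)"
    using N holds_univ_closure by (metis is_model_def)
  then have "sat N e (finite_or_cofinite_fm n x p)"
    using e by (simp add: holds_def)
  then show "finite {a \<in> dom N. sat N (e(x := a)) p} \<or> finite {a \<in> dom N. \<not> sat N (e(x := a)) p}"
    using N by (auto simp: sat_finite_or_cofinite_fm at_most_def is_model_def is_struc_def)
qed

end
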